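(* Let $L=E[C_1,\dots,C_n]$ be a congruence normal lattice (notation in the context). Then: (1) $L$ is join-extremal if and only if every $C_i$ is a lower pseudo-interval and, for every $i$, $C_i$ intersects the spine of $E[C_1,\dots,C_{i-1}]$. (2) $L$ is meet-extremal if and only if every $C_i$ is an upper pseudo-interval and, for every $i$, $C_i$ intersects the spine of $E[C_1,\dots,C_{i-1}]$. (3) $L$ is extremal if and only if every $C_i$ is an interval and, for every $i$, $C_i$ intersects the spine of $E[C_1,\dots,C_{i-1}]$.
   Context: All lattices are finite. A subset $C$ of a poset is convex if $x,y\in C$ implies $[x,y]\subseteq C$. For a convex subset $C$ of a lattice $L$, let $I_L(C)=\{y\in L\mid \exists x\in C,\ y\le x\}$. The doubling $L[C]$ is the subposet of $L\times\{0<1\}$ (product order) on the set $\big(I_L(C)\times\{0\}\big)\sqcup\big(((L\setminus I_L(C))\cup C)\times\{1\}\big)$; it is a lattice. $E[\,]$ denotes the one-element lattice and $E[C_1,\dots,C_{i+1}]:=E[C_1,\dots,C_i][C_{i+1}]$, where each $C_{i+1}$ is a nonempty convex subset of $E[C_1,\dots,C_i]$; a lattice of this form is congruence normal. A lower (resp. upper) pseudo-interval is a union of intervals sharing the same minimum (resp. maximum) element. The length $\ell(P)$ of a poset is the maximum number of elements of a chain minus one; the spine of $P$ is the set of elements lying on some chain of length $\ell(P)$. A lattice $L$ is join-extremal if $\ell(L)$ equals the number of join-irreducible elements (elements covering exactly one element), meet-extremal if $\ell(L)$ equals the number of meet-irreducible elements (elements covered by exactly one element), and extremal if both hold. *)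

theory Defs
  imports Main
begin

text \<open>The doubling L[C] is a subposet of
L \<times> {0<1}; the pair (x,b) is encoded as the list x @ [b] (False = 0, True = 1).\<close>

type_synonym pos = "bool list set \<times> (bool list \<Rightarrow> bool list \<Rightarrow> bool)"

definition convex :: "pos \<Rightarrow> bool list set \<Rightarrow> bool" where
  "convex L C \<longleftrightarrow> C \<subseteq> fst L \<and>
     (\<forall>x\<in>C. \<forall>y\<in>C. \<forall>z\<in>fst L. snd L x z \<and> snd L z y \<longrightarrow> z \<in> C)"

definition down_closure :: "pos \<Rightarrow> bool list set \<Rightarrow> bool list set" where
  "down_closure L C = {y \<in> fst L. \<exists>x\<in>C. snd L y x}"

definition dbl :: "pos \<Rightarrow> bool list set \<Rightarrow> pos" where
  "dbl L C =
    ({x @ [False] | x. x \<in> down_closure L C} \<union>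
     {x @ [True] | x. x \<in> (fst L - down_closure L C) \<union> C},
     (\<lambda>u v. snd L (butlast u) (butlast v) \<and> (last u \<longrightarrow> last v)))"

definition E0 :: pos where
  "E0 = ({[]}, (\<lambda>x y. x = y))"

definition E :: "bool list set list \<Rightarrow> pos" where
  "E Cs = foldl dbl E0 Cs"

definition interval :: "pos \<Rightarrow> bool list \<Rightarrow> bool list \<Rightarrow> bool list set" where
  "interval L a b = {z \<in> fst L. snd L a z \<and> snd L z b}"

definition is_interval :: "pos \<Rightarrow> bool list set \<Rightarrow> bool" where
  "is_interval L C \<longleftrightarrow> (\<exists>a\<in>fst L. \<exists>b\<in>fst L. snd L a b \<and> C = interval L a b)"

definition lower_pseudo_interval :: "pos \<Rightarrow> bool list set \<Rightarrow> bool" where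
  "lower_pseudo_interval L C \<longleftrightarrow>
     (\<exists>a\<in>fst L. \<exists>B. B \<noteq> {} \<and> B \<subseteq> fst L \<and> (\<forall>b\<in>B. snd L a b) \<and>
        C = (\<Union>b\<in>B. interval L a b))"

definition upper_pseudo_interval :: "pos \<Rightarrow> bool list set \<Rightarrow> bool" where
  "upper_pseudo_interval L C \<longleftrightarrow>
     (\<exists>b\<in>fst L. \<exists>A. A \<noteq> {} \<and> A \<subseteq> fst L \<and> (\<forall>a\<in>A. snd L a b) \<and>
        C = (\<Union>a\<in>A. interval L a b))"

definition is_chain :: "pos \<Rightarrow> bool list set \<Rightarrow> bool" where
  "is_chain L S \<longleftrightarrow> S \<subseteq> fst L \<and> (\<forall>x\<in>S. \<forall>y\<in>S. snd L x y \<or> snd L y x)"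

definition len :: "pos \<Rightarrow> nat" where
  "len L = Max {card S - 1 | S. is_chain L S \<and> finite S}"

definition spine :: "pos \<Rightarrow> bool list set" where
  "spine L = {x. \<exists>S. is_chain L S \<and> finite S \<and> card S = len L + 1 \<and> x \<in> S}"

text \<open>covers L x y: x covers y\<close>
definition covers :: "pos \<Rightarrow> bool list \<Rightarrow> bool list \<Rightarrow> bool" where
  "covers L x y \<longleftrightarrow> x \<in> fst L \<and> y \<in> fst L \<and> snd L y x \<and> y \<noteq> x \<and>
     (\<forall>z\<in>fst L. snd L y z \<and> snd L z x \<longrightarrow> z = y \<or> z = x)"

definition join_irreducibles :: "pos \<Rightarrow> bool list set" where
  "join_irreducibles L = {x \<in> fst L. card {y. covers L x y} = 1}"

definition meet_irreducibles :: "pos \<Rightarrow> bool list set" where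
  "meet_irreducibles L = {x \<in> fst L. card {y. covers L y x} = 1}"

definition join_extremal :: "pos \<Rightarrow> bool" where
  "join_extremal L \<longleftrightarrow> len L = card (join_irreducibles L)"

definition meet_extremal :: "pos \<Rightarrow> bool" where
  "meet_extremal L \<longleftrightarrow> len L = card (meet_irreducibles L)"

definition extremal :: "pos \<Rightarrow> bool" where
  "extremal L \<longleftrightarrow> join_extremal L \<and> meet_extremal L"

end

theory Submission
  imports Defs
begin

(* A single doubling L |-> L[C] of a convex set C adds exactly |Min C| join-irreducibles
   (the upper copies of the minimal elements of C; all others are inherited from L) and,
   dually, |Max C| meet-irreducibles.  It raises the length by one if C meets the spine
   of L and leaves it unchanged otherwise.  Summing along E[C_1, ..., C_n], the length is
   the number of steps whose C_i meets the spine, while |J| is the sum of the |Min C_i|,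
   each at least 1; so they agree iff every C_i meets the spine and has a least element,
   i.e. is a lower pseudo-interval. *)

section \<open>Finite posets and order duality\<close>

locale finite_poset =
  fixes L :: pos
  assumes finite_carrier: "finite (fst L)"
    and carrier_nonempty: "fst L \<noteq> {}"
    and le_refl: "x \<in> fst L \<Longrightarrow> snd L x x"
    and le_antisym: "x \<in> fst L \<Longrightarrow> y \<in> fst L \<Longrightarrow> snd L x y \<Longrightarrow> snd L y x \<Longrightarrow> x = y"
    and le_trans:
      "x \<in> fst L \<Longrightarrow> y \<in> fst L \<Longrightarrow> z \<in> fst L \<Longrightarrow> snd L x y \<Longrightarrow> snd L y z \<Longrightarrow> snd L x z"

definition dual :: "pos \<Rightarrow> pos" where
  "dual L = (fst L, \<lambda>x y. snd L y x)"

lemma fst_dual [simp]: "fst (dual L) = fst L"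
  and snd_dual [simp]: "snd (dual L) x y = snd L y x"
  by (simp_all add: dual_def)

lemma covers_dual [simp]: "covers (dual L) x y \<longleftrightarrow> covers L y x"
  unfolding covers_def by auto

lemma convex_dual [simp]: "convex (dual L) C \<longleftrightarrow> convex L C"
  unfolding convex_def by auto

lemma interval_dual [simp]: "interval (dual L) a b = interval L b a"
  unfolding interval_def by auto

lemma lower_pseudo_interval_dual [simp]:
  "lower_pseudo_interval (dual L) C \<longleftrightarrow> upper_pseudo_interval L C"
  unfolding lower_pseudo_interval_def upper_pseudo_interval_def by simp

lemma (in finite_poset) finite_poset_dual: "finite_poset (dual L)"
proof
  show "finite (fst (dual L))" "fst (dual L) \<noteq> {}"
    using finite_carrier carrier_nonempty by simp_all
next
  show "snd (dual L) x x" if "x \<in> fst (dual L)" for x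
    using that le_refl by simp
next
  show "x = y" if "x \<in> fst (dual L)" "y \<in> fst (dual L)" "snd (dual L) x y" "snd (dual L) y x"
    for x y
    using that le_antisym[of x y] by simp
next
  show "snd (dual L) x z" if "x \<in> fst (dual L)" "y \<in> fst (dual L)" "z \<in> fst (dual L)"
    "snd (dual L) x y" "snd (dual L) y z" for x y z
    using that le_trans[of z y x] by simp
qed

definition minimal_elements :: "pos \<Rightarrow> bool list set \<Rightarrow> bool list set" where
  "minimal_elements L C = {x \<in> C. \<forall>y\<in>C. snd L y x \<longrightarrow> y = x}"

abbreviation maximal_elements :: "pos \<Rightarrow> bool list set \<Rightarrow> bool list set" where
  "maximal_elements L C \<equiv> minimal_elements (dual L) C"

lemma minimal_elements_subset: "minimal_elements L C \<subseteq> C"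
  unfolding minimal_elements_def by blast

lemma covers_irrefl: "covers L x y \<Longrightarrow> x \<noteq> y"
  unfolding covers_def by blast

lemma convex_subset: "convex L C \<Longrightarrow> C \<subseteq> fst L"
  unfolding convex_def by blast

lemma convexD:
  "convex L C \<Longrightarrow> a \<in> C \<Longrightarrow> b \<in> C \<Longrightarrow> z \<in> fst L \<Longrightarrow> snd L a z \<Longrightarrow> snd L z b \<Longrightarrow> z \<in> C"
  unfolding convex_def by blast

context finite_poset
begin

lemma ex_minimal_below:
  assumes "S \<subseteq> fst L" "c \<in> S"
  shows "\<exists>m\<in>minimal_elements L S. snd L m c"
  using assms(2)
proof (induction "card {w \<in> S. snd L w c}" arbitrary: c rule: less_induct)
  case less
  show ?case
  proof (cases "c \<in> minimal_elements L S")
    case True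
    then show ?thesis
      using less.prems assms(1) le_refl[of c] by blast
  next
    case False
    then obtain y where y: "y \<in> S" "snd L y c" "y \<noteq> c"
      using less.prems unfolding minimal_elements_def by blast
    have "{w \<in> S. snd L w y} \<subseteq> {w \<in> S. snd L w c}"
      using y less.prems assms(1) le_trans[of _ y c] by blast
    moreover have "c \<notin> {w \<in> S. snd L w y}"
      using y less.prems assms(1) le_antisym[of y c] by blast
    moreover have "finite {w \<in> S. snd L w c}"
      using assms(1) by (blast intro: finite_subset[OF _ finite_carrier])
    ultimately have "card {w \<in> S. snd L w y} < card {w \<in> S. snd L w c}"
      using less.prems assms(1) le_refl[of c] by (intro psubset_card_mono) auto
    then obtain m where m: "m \<in> minimal_elements L S" "snd L m y"
      using less.hyps y(1) by blast
    moreover have "m \<in> fst L"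
      using m(1) assms(1) unfolding minimal_elements_def by blast
    ultimately show ?thesis
      using le_trans[of m y c] y less.prems assms(1) by blast
  qed
qed

lemma ex_maximal_above:
  assumes "S \<subseteq> fst L" "c \<in> S"
  shows "\<exists>m\<in>maximal_elements L S. snd L c m"
  using finite_poset.ex_minimal_below[OF finite_poset_dual] assms by simp

lemma ex_lower_cover_above:
  assumes "x \<in> fst L" "y \<in> fst L" "snd L y x" "y \<noteq> x"
  shows "\<exists>z. covers L x z \<and> snd L y z"
proof -
  let ?S = "{z \<in> fst L. snd L y z \<and> snd L z x \<and> z \<noteq> x}"
  obtain z where z: "z \<in> maximal_elements L ?S" "snd L y z"
    using ex_maximal_above[of ?S y] assms le_refl[of y] by auto
  then have zS: "z \<in> fst L" "snd L z x" "z \<noteq> x"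
    unfolding minimal_elements_def by auto
  have "w = z \<or> w = x" if "w \<in> fst L" "snd L z w" "snd L w x" for w
  proof (cases "w = x")
    case False
    with that zS z(2) assms(2) have "w \<in> ?S"
      using le_trans[of y z w] by blast
    with z(1) that(2) show ?thesis
      unfolding minimal_elements_def by auto
  qed simp
  then show ?thesis
    using zS z(2) assms(1) unfolding covers_def by blast
qed

lemma no_lower_cover_in_convex_iff_minimal:
  assumes "convex L C" "x \<in> C"
  shows "{y. covers L x y \<and> y \<in> C} = {} \<longleftrightarrow> x \<in> minimal_elements L C"
proof
  assume no_cover: "{y. covers L x y \<and> y \<in> C} = {}"
  have "y = x" if y: "y \<in> C" "snd L y x" for y
  proof (rule ccontr)
    assume "y \<noteq> x"
    then obtain z where z: "covers L x z" "snd L y z"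
      using ex_lower_cover_above[of x y] y assms(2) convex_subset[OF assms(1)] by blast
    then have "z \<in> C"
      using convexD[OF assms(1) y(1) assms(2), of z] unfolding covers_def by blast
    with z(1) no_cover show False by blast
  qed
  with assms(2) show "x \<in> minimal_elements L C"
    unfolding minimal_elements_def by blast
next
  assume "x \<in> minimal_elements L C"
  then show "{y. covers L x y \<and> y \<in> C} = {}"
    unfolding minimal_elements_def covers_def by blast
qed

lemma no_upper_cover_in_convex_iff_maximal:
  assumes "convex L C" "x \<in> C"
  shows "{y. covers L y x \<and> y \<in> C} = {} \<longleftrightarrow> x \<in> maximal_elements L C"
  using finite_poset.no_lower_cover_in_convex_iff_minimal[OF finite_poset_dual] assms by simp

lemma card_minimal_elements_pos:
  assumes "C \<subseteq> fst L" "C \<noteq> {}"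
  shows "0 < card (minimal_elements L C)"
proof -
  obtain c where "c \<in> C"
    using assms(2) by blast
  then have "minimal_elements L C \<noteq> {}"
    using ex_minimal_below[OF assms(1)] by blast
  moreover have "finite (minimal_elements L C)"
    using assms(1) finite_carrier unfolding minimal_elements_def by (auto intro: finite_subset)
  ultimately show ?thesis
    by (simp add: card_gt_0_iff)
qed

lemma card_maximal_elements_pos:
  "C \<subseteq> fst L \<Longrightarrow> C \<noteq> {} \<Longrightarrow> 0 < card (maximal_elements L C)"
  using finite_poset.card_minimal_elements_pos[OF finite_poset_dual] by simp

lemma card_minimal_elements_eq_1_iff:
  assumes "C \<subseteq> fst L"
  shows "card (minimal_elements L C) = 1 \<longleftrightarrow> (\<exists>a\<in>C. \<forall>c\<in>C. snd L a c)"
proof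
  assume "card (minimal_elements L C) = 1"
  then obtain a where a: "minimal_elements L C = {a}"
    by (rule card_1_singletonE)
  have "snd L a c" if "c \<in> C" for c
    using ex_minimal_below[OF assms that] by (simp add: a)
  moreover have "a \<in> C"
    using a unfolding minimal_elements_def by blast
  ultimately show "\<exists>a\<in>C. \<forall>c\<in>C. snd L a c"
    by blast
next
  assume "\<exists>a\<in>C. \<forall>c\<in>C. snd L a c"
  then obtain a where a: "a \<in> C" "\<forall>c\<in>C. snd L a c"
    by blast
  then have "minimal_elements L C = {a}"
    using assms le_antisym unfolding minimal_elements_def by blast
  then show "card (minimal_elements L C) = 1"
    by simp
qed

lemma lower_pseudo_interval_iff_least:
  assumes "convex L C" "C \<noteq> {}"
  shows "lower_pseudo_interval L C \<longleftrightarrow> (\<exists>a\<in>C. \<forall>c\<in>C. snd L a c)"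
proof
  assume "lower_pseudo_interval L C"
  then obtain a B where a: "a \<in> fst L" "B \<noteq> {}" "\<forall>b\<in>B. snd L a b"
    and C: "C = (\<Union>b\<in>B. interval L a b)"
    unfolding lower_pseudo_interval_def by blast
  have "a \<in> C"
    using a le_refl[of a] unfolding C interval_def by blast
  moreover have "\<forall>c\<in>C. snd L a c"
    unfolding C interval_def by blast
  ultimately show "\<exists>a\<in>C. \<forall>c\<in>C. snd L a c"
    by blast
next
  assume "\<exists>a\<in>C. \<forall>c\<in>C. snd L a c"
  then obtain a where a: "a \<in> C" "\<forall>c\<in>C. snd L a c"
    by blast
  have "C = (\<Union>b\<in>C. interval L a b)"
    using a convex_subset[OF assms(1)] le_refl convexD[OF assms(1) a(1)]
    unfolding interval_def by blast
  then show "lower_pseudo_interval L C"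
    unfolding lower_pseudo_interval_def
    using a convex_subset[OF assms(1)] assms(2) by blast
qed

lemma is_interval_iff_least_greatest:
  assumes "convex L C"
  shows "is_interval L C \<longleftrightarrow> (\<exists>a\<in>C. \<forall>c\<in>C. snd L a c) \<and> (\<exists>b\<in>C. \<forall>c\<in>C. snd L c b)"
proof
  assume "is_interval L C"
  then obtain a b where "a \<in> fst L" "b \<in> fst L" "snd L a b" "C = interval L a b"
    unfolding is_interval_def by blast
  then show "(\<exists>a\<in>C. \<forall>c\<in>C. snd L a c) \<and> (\<exists>b\<in>C. \<forall>c\<in>C. snd L c b)"
    using le_refl unfolding interval_def by blast
next
  assume "(\<exists>a\<in>C. \<forall>c\<in>C. snd L a c) \<and> (\<exists>b\<in>C. \<forall>c\<in>C. snd L c b)"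
  then obtain a b where a: "a \<in> C" "\<forall>c\<in>C. snd L a c" and b: "b \<in> C" "\<forall>c\<in>C. snd L c b"
    by blast
  have "C = interval L a b"
    using a b convex_subset[OF assms] convexD[OF assms a(1) b(1)] unfolding interval_def by blast
  then show "is_interval L C"
    unfolding is_interval_def using a(1) b convex_subset[OF assms] by blast
qed

lemma pseudo_intervals_iff_card_extremal_elements:
  assumes "convex L C" "C \<noteq> {}"
  shows "lower_pseudo_interval L C \<longleftrightarrow> card (minimal_elements L C) = 1"
    and "upper_pseudo_interval L C \<longleftrightarrow> card (maximal_elements L C) = 1"
    and "is_interval L C \<longleftrightarrow> card (minimal_elements L C) = 1 \<and> card (maximal_elements L C) = 1"
proof -
  have dual: "finite_poset (dual L)" "convex (dual L) C" "C \<subseteq> fst (dual L)"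
    using finite_poset_dual assms(1) convex_subset[OF assms(1)] by simp_all
  show "lower_pseudo_interval L C \<longleftrightarrow> card (minimal_elements L C) = 1"
    using lower_pseudo_interval_iff_least[OF assms] card_minimal_elements_eq_1_iff
      convex_subset[OF assms(1)] by simp
  show "upper_pseudo_interval L C \<longleftrightarrow> card (maximal_elements L C) = 1"
    using finite_poset.lower_pseudo_interval_iff_least[OF dual(1,2) assms(2)]
      finite_poset.card_minimal_elements_eq_1_iff[OF dual(1,3)] by simp
  show "is_interval L C \<longleftrightarrow> card (minimal_elements L C) = 1 \<and> card (maximal_elements L C) = 1"
    using is_interval_iff_least_greatest[OF assms(1)] card_minimal_elements_eq_1_iff
      finite_poset.card_minimal_elements_eq_1_iff[OF dual(1,3)] convex_subset[OF assms(1)] by simp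
qed

section \<open>Length and spine\<close>

lemma finite_chain: "is_chain L S \<Longrightarrow> finite S"
  unfolding is_chain_def using finite_carrier finite_subset by blast

lemma finite_chain_cards: "finite {card S - 1 | S. is_chain L S \<and> finite S}"
proof (rule finite_subset)
  show "{card S - 1 | S. is_chain L S \<and> finite S} \<subseteq> {..card (fst L)}"
    unfolding is_chain_def using card_mono[OF finite_carrier] by fastforce
qed simp

lemma card_chain_le_len:
  assumes "is_chain L S"
  shows "card S \<le> len L + 1"
proof -
  have "card S - 1 \<le> len L"
    unfolding len_def using assms finite_chain[OF assms] by (blast intro: Max_ge[OF finite_chain_cards])
  then show ?thesis
    by simp
qed

lemma ex_chain_card_len: "\<exists>S. is_chain L S \<and> card S = len L + 1"
proof -
  have "is_chain L {}"
    unfolding is_chain_def by blast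
  then have "len L \<in> {card S - 1 | S. is_chain L S \<and> finite S}"
    unfolding len_def by (intro Max_in[OF finite_chain_cards]) blast
  then obtain S where S: "is_chain L S" "len L = card S - 1"
    by blast
  show ?thesis
  proof (cases "S = {}")
    case True
    obtain a where a: "a \<in> fst L"
      using carrier_nonempty by blast
    then have "is_chain L {a}"
      using le_refl unfolding is_chain_def by blast
    with S True show ?thesis
      by force
  next
    case False
    then show ?thesis
      using S finite_chain[OF S(1)] by (metis Suc_eq_plus1 Suc_pred' card_gt_0_iff)
  qed
qed

lemma len_eqI:
  assumes "\<And>S. is_chain L S \<Longrightarrow> card S \<le> k + 1" "is_chain L S\<^sub>0" "card S\<^sub>0 = k + 1"
  shows "len L = k"
  using card_chain_le_len[OF assms(2)] ex_chain_card_len assms by (metis add_le_cancel_right antisym)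

end

lemma mem_spine_iff: "x \<in> spine L \<longleftrightarrow> (\<exists>S. is_chain L S \<and> card S = len L + 1 \<and> x \<in> S)"
proof -
  have "finite S" if "card S = len L + 1" for S :: "bool list set"
    using that card.infinite by fastforce
  then show ?thesis
    unfolding spine_def by blast
qed

section \<open>Doubling a convex set\<close>

lemma inj_on_snoc: "inj_on (\<lambda>x. x @ [f x]) A"
  by (rule inj_onI) simp

lemma set_eq_snocI:
  assumes "[] \<notin> A" "[] \<notin> B" "\<And>x b. x @ [b] \<in> A \<longleftrightarrow> x @ [b] \<in> B"
  shows "A = B"
proof (rule set_eqI)
  fix u
  show "u \<in> A \<longleftrightarrow> u \<in> B"
    using assms by (cases u rule: rev_exhaust) simp_all
qed

lemma card_snoc_set:
  assumes "finite S" "[] \<notin> S"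
  shows "card S = card (butlast ` S) + card {x. x @ [False] \<in> S \<and> x @ [True] \<in> S}"
proof -
  let ?F = "{x. x @ [False] \<in> S}" and ?T = "{x. x @ [True] \<in> S}"
  have split: "S = (\<lambda>x. x @ [False]) ` ?F \<union> (\<lambda>x. x @ [True]) ` ?T"
  proof (intro equalityI subsetI)
    fix u
    assume u: "u \<in> S"
    then obtain x b where "u = x @ [b]"
      using assms(2) by (cases u rule: rev_exhaust) auto
    with u show "u \<in> (\<lambda>x. x @ [False]) ` ?F \<union> (\<lambda>x. x @ [True]) ` ?T"
      by (cases b) auto
  qed auto
  have fin: "finite ?F" "finite ?T"
    using finite_vimageI[OF assms(1), of "\<lambda>x. x @ [False]"] finite_vimageI[OF assms(1), of "\<lambda>x. x @ [True]"]
    by (simp_all add: vimage_def inj_def)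
  have "card S = card ?F + card ?T"
    by (subst split, subst card_Un_disjoint) (use fin in \<open>auto simp: card_image[OF inj_on_snoc]\<close>)
  also have "\<dots> = card (?F \<union> ?T) + card (?F \<inter> ?T)"
    using card_Un_Int[OF fin] .
  also have "?F \<union> ?T = butlast ` S"
    by (subst split) (simp add: image_Un image_image)
  also have "?F \<inter> ?T = {x. x @ [False] \<in> S \<and> x @ [True] \<in> S}"
    by blast
  finally show ?thesis .
qed

locale doubling = finite_poset +
  fixes C :: "bool list set"
  assumes convex: "convex L C"
begin

definition I :: "bool list set" where
  "I = down_closure L C"

definition D :: "bool list set" where
  "D = (fst L - I) \<union> C"

lemma C_subset: "C \<subseteq> fst L"
  using convex_subset[OF convex] .

lemma I_subset: "I \<subseteq> fst L"
  unfolding I_def down_closure_def by blast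

lemma C_subset_I: "C \<subseteq> I"
  unfolding I_def down_closure_def using C_subset le_refl by blast

lemma I_Un_D: "I \<union> D = fst L"
  unfolding D_def using I_subset C_subset by blast

lemma I_Int_D: "I \<inter> D = C"
  unfolding D_def using C_subset_I by blast

lemma in_C_if_in_I_D: "x \<in> I \<Longrightarrow> x \<in> D \<Longrightarrow> x \<in> C"
  using I_Int_D by blast

lemma I_down_closed:
  assumes "x \<in> I" "y \<in> fst L" "snd L y x"
  shows "y \<in> I"
proof -
  obtain c where c: "c \<in> C" "snd L x c" "x \<in> fst L"
    using assms(1) unfolding I_def down_closure_def by blast
  then have "snd L y c"
    using le_trans[of y x c] assms C_subset by blast
  with c(1) assms(2) show ?thesis
    unfolding I_def down_closure_def by blast
qed

lemma D_up_closed: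
  assumes "x \<in> D" "y \<in> fst L" "snd L x y"
  shows "y \<in> D"
proof (cases "y \<in> I")
  case True
  have "x \<in> fst L"
    using assms(1) I_Un_D by blast
  with True assms have "x \<in> C"
    using I_down_closed[of y x] unfolding D_def by blast
  moreover obtain c where "c \<in> C" "snd L y c"
    using True unfolding I_def down_closure_def by blast
  ultimately have "y \<in> C"
    using convexD[OF convex, of x c y] assms by blast
  then show ?thesis
    unfolding D_def by blast
next
  case False
  with assms(2) show ?thesis
    unfolding D_def by blast
qed

lemma carrier_dbl: "fst (dbl L C) = (\<lambda>x. x @ [False]) ` I \<union> (\<lambda>x. x @ [True]) ` D"
  unfolding dbl_def I_def D_def by auto

lemma mem_dbl [simp]: "x @ [b] \<in> fst (dbl L C) \<longleftrightarrow> (if b then x \<in> D else x \<in> I)"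
  unfolding carrier_dbl by auto

lemma le_dbl [simp]: "snd (dbl L C) (x @ [b]) (y @ [c]) \<longleftrightarrow> snd L x y \<and> (b \<longrightarrow> c)"
  unfolding dbl_def by simp

lemma mem_dblE:
  assumes "u \<in> fst (dbl L C)"
  obtains x b where "u = x @ [b]" "x @ [b] \<in> fst (dbl L C)"
  using assms unfolding carrier_dbl by auto

lemma ball_dbl: "(\<forall>u\<in>fst (dbl L C). P u) \<longleftrightarrow> (\<forall>x b. x @ [b] \<in> fst (dbl L C) \<longrightarrow> P (x @ [b]))"
  by (metis mem_dblE)

lemma mem_dbl_unless_top: "\<not> (b \<and> x \<in> C) \<Longrightarrow> x @ [b] \<in> fst (dbl L C) \<longleftrightarrow> x \<in> fst L \<and> b = (x \<notin> I)"
  using I_Un_D I_Int_D by auto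

lemma mem_dbl_unless_bottom: "\<not> (\<not> b \<and> x \<in> C) \<Longrightarrow> x @ [b] \<in> fst (dbl L C) \<longleftrightarrow> x \<in> fst L \<and> b = (x \<in> D)"
  using I_Un_D I_Int_D by auto

lemma mem_dbl_carrier: "x @ [b] \<in> fst (dbl L C) \<Longrightarrow> x \<in> fst L"
  using I_Un_D by (auto split: if_splits)

lemma mem_dbl_snoc: "u \<in> fst (dbl L C) \<Longrightarrow> u = butlast u @ [last u]"
  unfolding carrier_dbl by auto

lemma butlast_mem_dbl: "u \<in> fst (dbl L C) \<Longrightarrow> butlast u \<in> fst L"
  using mem_dbl_snoc mem_dbl_carrier by metis

lemma finite_poset_dbl: "finite_poset (dbl L C)"
proof
  show "finite (fst (dbl L C))"
    unfolding carrier_dbl using I_Un_D finite_carrier by (auto intro: finite_subset)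
  show "fst (dbl L C) \<noteq> {}"
    unfolding carrier_dbl using I_Un_D carrier_nonempty by blast
next
  fix u assume "u \<in> fst (dbl L C)"
  then obtain x b where "u = x @ [b]" "x @ [b] \<in> fst (dbl L C)"
    by (rule mem_dblE)
  then show "snd (dbl L C) u u"
    using le_refl[of x] mem_dbl_carrier by simp
next
  fix u v assume "u \<in> fst (dbl L C)" "v \<in> fst (dbl L C)"
    and le: "snd (dbl L C) u v" "snd (dbl L C) v u"
  then obtain x b y c where "u = x @ [b]" "x @ [b] \<in> fst (dbl L C)"
    and "v = y @ [c]" "y @ [c] \<in> fst (dbl L C)"
    by (metis mem_dblE)
  then show "u = v"
    using le le_antisym[of x y] mem_dbl_carrier by auto
next
  fix u v w assume "u \<in> fst (dbl L C)" "v \<in> fst (dbl L C)" "w \<in> fst (dbl L C)"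
    and le: "snd (dbl L C) u v" "snd (dbl L C) v w"
  then obtain x b y c z d where "u = x @ [b]" "x @ [b] \<in> fst (dbl L C)"
    and "v = y @ [c]" "y @ [c] \<in> fst (dbl L C)" and "w = z @ [d]" "z @ [d] \<in> fst (dbl L C)"
    by (metis mem_dblE)
  then show "snd (dbl L C) u w"
    using le le_trans[of x y z] mem_dbl_carrier by auto
qed

lemma covers_dbl_unfolded:
  "covers (dbl L C) (x @ [b]) (y @ [c]) \<longleftrightarrow>
     x @ [b] \<in> fst (dbl L C) \<and> y @ [c] \<in> fst (dbl L C) \<and> snd L y x \<and> (c \<longrightarrow> b) \<and>
     (y \<noteq> x \<or> c \<noteq> b) \<and>
     (\<forall>z d. z @ [d] \<in> fst (dbl L C) \<and> snd L y z \<and> (c \<longrightarrow> d) \<and> snd L z x \<and> (d \<longrightarrow> b)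
        \<longrightarrow> z = y \<and> d = c \<or> z = x \<and> d = b)"
  unfolding covers_def ball_dbl le_dbl by auto

lemma covers_dbl_mem:
  "covers (dbl L C) u v \<Longrightarrow> u \<in> fst (dbl L C) \<and> v \<in> fst (dbl L C)"
  unfolding covers_def by blast

lemma covers_dbl_same_iff:
  "covers (dbl L C) (x @ [b]) (x @ [c]) \<longleftrightarrow>
     x @ [b] \<in> fst (dbl L C) \<and> x @ [c] \<in> fst (dbl L C) \<and> b \<and> \<not> c"
proof
  assume "covers (dbl L C) (x @ [b]) (x @ [c])"
  then show "x @ [b] \<in> fst (dbl L C) \<and> x @ [c] \<in> fst (dbl L C) \<and> b \<and> \<not> c"
    unfolding covers_dbl_unfolded by auto
next
  assume mem: "x @ [b] \<in> fst (dbl L C) \<and> x @ [c] \<in> fst (dbl L C) \<and> b \<and> \<not> c"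
  then have x: "x \<in> fst L"
    using mem_dbl_carrier by blast
  have "z = x" if "z @ [d] \<in> fst (dbl L C)" "snd L x z" "snd L z x" for z d
    using le_antisym[of z x] mem_dbl_carrier[OF that(1)] x that by blast
  then show "covers (dbl L C) (x @ [b]) (x @ [c])"
    using mem le_refl[OF x] unfolding covers_dbl_unfolded by (metis (full_types))
qed

lemma covers_dbl_distinctD:
  assumes "covers (dbl L C) (x @ [b]) (y @ [c])" "x \<noteq> y"
  shows "covers L x y" and "c \<longrightarrow> b" and "b \<and> \<not> c \<Longrightarrow> x \<notin> C \<and> y \<notin> C"
proof -
  have mem: "x @ [b] \<in> fst (dbl L C)" "y @ [c] \<in> fst (dbl L C)"
    and le: "snd L y x" "c \<longrightarrow> b"
    and between: "\<And>z d. z @ [d] \<in> fst (dbl L C) \<Longrightarrow> snd L y z \<Longrightarrow> (c \<longrightarrow> d) \<Longrightarrow>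
      snd L z x \<Longrightarrow> (d \<longrightarrow> b) \<Longrightarrow> z = y \<and> d = c \<or> z = x \<and> d = b"
    using assms(1) unfolding covers_dbl_unfolded by blast+
  have x: "x \<in> fst L" and y: "y \<in> fst L"
    using mem mem_dbl_carrier by blast+
  have "z = y \<or> z = x" if z: "z \<in> fst L" "snd L y z" "snd L z x" for z
  proof -
    let ?d = "c \<or> (b \<and> z \<notin> I)"
    have "z @ [?d] \<in> fst (dbl L C)"
      using D_up_closed[of y z] I_down_closed[of x z] I_Un_D mem z by (cases b; cases c) auto
    then show ?thesis
      using between[of z ?d] z le by blast
  qed
  then show "covers L x y"
    unfolding covers_def using x y le assms(2) by blast
  show "c \<longrightarrow> b"
    by (fact le(2))
  assume "b \<and> \<not> c"
  moreover have "x @ [False] \<in> fst (dbl L C)" if "x \<in> C"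
    using that C_subset_I by auto
  moreover have "y @ [True] \<in> fst (dbl L C)" if "y \<in> C"
    using that I_Int_D by auto
  ultimately show "x \<notin> C \<and> y \<notin> C"
    using between[of x False] between[of y True] le le_refl[OF x] le_refl[OF y] assms(2) by blast
qed

lemma covers_dbl_distinctI:
  assumes "x @ [b] \<in> fst (dbl L C)" "y @ [c] \<in> fst (dbl L C)" "covers L x y" "c \<longrightarrow> b"
    and "b \<and> \<not> c \<longrightarrow> x \<notin> C \<and> y \<notin> C"
  shows "covers (dbl L C) (x @ [b]) (y @ [c])"
proof -
  have "z = y \<and> d = c \<or> z = x \<and> d = b"
    if z: "z @ [d] \<in> fst (dbl L C)" "snd L y z" "c \<longrightarrow> d" "snd L z x" "d \<longrightarrow> b" for z d
  proof -
    have "z = y \<or> z = x"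
      using assms(3) z mem_dbl_carrier[OF z(1)] unfolding covers_def by blast
    then show ?thesis
      using assms z in_C_if_in_I_D by (cases b; cases c; cases d) auto
  qed
  moreover have "snd L y x"
    using assms(3) unfolding covers_def by blast
  ultimately show ?thesis
    using assms covers_irrefl[OF assms(3)] unfolding covers_dbl_unfolded by blast
qed

text \<open>A cover from level 0 up to level 1 cannot start or end in C: the other copy of
  that element would lie strictly in between.\<close>

lemma covers_dbl_iff:
  "covers (dbl L C) (x @ [b]) (y @ [c]) \<longleftrightarrow>
     x @ [b] \<in> fst (dbl L C) \<and> y @ [c] \<in> fst (dbl L C) \<and>
     (if x = y then b \<and> \<not> c else covers L x y \<and> (c \<longrightarrow> b) \<and> (b \<and> \<not> c \<longrightarrow> x \<notin> C \<and> y \<notin> C))"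
proof (cases "x = y")
  case True
  then show ?thesis
    using covers_dbl_same_iff by simp
next
  case False
  show ?thesis
  proof
    assume cov: "covers (dbl L C) (x @ [b]) (y @ [c])"
    then show "x @ [b] \<in> fst (dbl L C) \<and> y @ [c] \<in> fst (dbl L C) \<and>
      (if x = y then b \<and> \<not> c else covers L x y \<and> (c \<longrightarrow> b) \<and> (b \<and> \<not> c \<longrightarrow> x \<notin> C \<and> y \<notin> C))"
      using covers_dbl_mem[OF cov] covers_dbl_distinctD[OF cov False] False by simp
  qed (use False covers_dbl_distinctI in simp)
qed

lemma lower_covers_dbl:
  assumes "x @ [b] \<in> fst (dbl L C)" "\<not> (b \<and> x \<in> C)"
  shows "{v. covers (dbl L C) (x @ [b]) v} = (\<lambda>y. y @ [b \<and> y \<in> D]) ` {y. covers L x y}"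
proof (intro set_eqI iffI)
  fix v
  assume "v \<in> {v. covers (dbl L C) (x @ [b]) v}"
  then have cov: "covers (dbl L C) (x @ [b]) v"
    by simp
  then obtain y c where v: "v = y @ [c]" "y @ [c] \<in> fst (dbl L C)"
    using covers_dbl_mem by (metis mem_dblE)
  have "x \<noteq> y"
    using cov assms in_C_if_in_I_D unfolding v covers_dbl_iff by auto
  then have "covers L x y" "c = (b \<and> y \<in> D)"
    using cov v(2) I_Int_D unfolding v covers_dbl_iff by (auto split: if_splits)
  then show "v \<in> (\<lambda>y. y @ [b \<and> y \<in> D]) ` {y. covers L x y}"
    unfolding v by simp
next
  fix v
  assume "v \<in> (\<lambda>y. y @ [b \<and> y \<in> D]) ` {y. covers L x y}"
  then obtain y where y: "covers L x y" and v: "v = y @ [b \<and> y \<in> D]"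
    by blast
  have "y \<in> fst L" "snd L y x" "x \<noteq> y"
    using y unfolding covers_def by auto
  then have "y @ [b \<and> y \<in> D] \<in> fst (dbl L C)"
    using assms(1) I_down_closed[of x y] I_Un_D by (cases b) auto
  then show "v \<in> {v. covers (dbl L C) (x @ [b]) v}"
    using assms y \<open>x \<noteq> y\<close> I_Int_D unfolding v mem_Collect_eq covers_dbl_iff by auto
qed

lemma upper_covers_dbl:
  assumes "x @ [b] \<in> fst (dbl L C)" "\<not> (\<not> b \<and> x \<in> C)"
  shows "{v. covers (dbl L C) v (x @ [b])} = (\<lambda>y. y @ [b \<or> y \<notin> I]) ` {y. covers L y x}"
proof (intro set_eqI iffI)
  fix v
  assume "v \<in> {v. covers (dbl L C) v (x @ [b])}"
  then have cov: "covers (dbl L C) v (x @ [b])"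
    by simp
  then obtain y c where v: "v = y @ [c]" "y @ [c] \<in> fst (dbl L C)"
    using covers_dbl_mem by (metis mem_dblE)
  have "x \<noteq> y"
    using cov assms in_C_if_in_I_D unfolding v covers_dbl_iff by auto
  then have "covers L y x" "c = (b \<or> y \<notin> I)"
    using cov v(2) I_Int_D unfolding v covers_dbl_iff by (auto split: if_splits)
  then show "v \<in> (\<lambda>y. y @ [b \<or> y \<notin> I]) ` {y. covers L y x}"
    unfolding v by simp
next
  fix v
  assume "v \<in> (\<lambda>y. y @ [b \<or> y \<notin> I]) ` {y. covers L y x}"
  then obtain y where y: "covers L y x" and v: "v = y @ [b \<or> y \<notin> I]"
    by blast
  have "y \<in> fst L" "snd L x y" "x \<noteq> y"
    using y unfolding covers_def by auto
  then have "y @ [b \<or> y \<notin> I] \<in> fst (dbl L C)"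
    using assms(1) D_up_closed[of x y] I_Un_D by (cases b) auto
  then show "v \<in> {v. covers (dbl L C) v (x @ [b])}"
    using assms y \<open>x \<noteq> y\<close> I_Int_D unfolding v mem_Collect_eq covers_dbl_iff by auto
qed

lemma lower_covers_dbl_top:
  assumes "x \<in> C"
  shows "{v. covers (dbl L C) (x @ [True]) v} =
    insert (x @ [False]) ((\<lambda>y. y @ [True]) ` {y. covers L x y \<and> y \<in> C})"
proof (intro set_eqI iffI)
  fix v
  assume "v \<in> {v. covers (dbl L C) (x @ [True]) v}"
  then have cov: "covers (dbl L C) (x @ [True]) v"
    by simp
  then obtain y c where v: "v = y @ [c]" "y @ [c] \<in> fst (dbl L C)"
    using covers_dbl_mem by (metis mem_dblE)
  show "v \<in> insert (x @ [False]) ((\<lambda>y. y @ [True]) ` {y. covers L x y \<and> y \<in> C})"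
  proof (cases "y = x")
    case False
    then have "covers L x y" "c"
      using cov assms unfolding v covers_dbl_iff by auto
    moreover have "y \<in> I"
      using I_down_closed[of x y] \<open>covers L x y\<close> assms C_subset_I unfolding covers_def by blast
    ultimately show ?thesis
      using v(2) I_Int_D unfolding v by auto
  qed (use cov in \<open>auto simp: v covers_dbl_iff\<close>)
next
  fix v
  assume "v \<in> insert (x @ [False]) ((\<lambda>y. y @ [True]) ` {y. covers L x y \<and> y \<in> C})"
  then show "v \<in> {v. covers (dbl L C) (x @ [True]) v}"
    using assms C_subset_I I_Int_D covers_irrefl[of L] by (auto simp: covers_dbl_iff)
qed

lemma upper_covers_dbl_bottom:
  assumes "x \<in> C"
  shows "{v. covers (dbl L C) v (x @ [False])} =
    insert (x @ [True]) ((\<lambda>y. y @ [False]) ` {y. covers L y x \<and> y \<in> C})"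
proof (intro set_eqI iffI)
  fix v
  assume "v \<in> {v. covers (dbl L C) v (x @ [False])}"
  then have cov: "covers (dbl L C) v (x @ [False])"
    by simp
  then obtain y c where v: "v = y @ [c]" "y @ [c] \<in> fst (dbl L C)"
    using covers_dbl_mem by (metis mem_dblE)
  show "v \<in> insert (x @ [True]) ((\<lambda>y. y @ [False]) ` {y. covers L y x \<and> y \<in> C})"
  proof (cases "y = x")
    case False
    then have "covers L y x" "\<not> c"
      using cov assms unfolding v covers_dbl_iff by auto
    moreover have "y \<in> D"
      using D_up_closed[of x y] \<open>covers L y x\<close> assms I_Int_D unfolding covers_def by blast
    ultimately show ?thesis
      using v(2) I_Int_D unfolding v by auto
  qed (use cov in \<open>auto simp: v covers_dbl_iff\<close>)
next
  fix v
  assume "v \<in> insert (x @ [True]) ((\<lambda>y. y @ [False]) ` {y. covers L y x \<and> y \<in> C})"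
  then show "v \<in> {v. covers (dbl L C) v (x @ [False])}"
    using assms C_subset_I I_Int_D covers_irrefl[of L] by (auto simp: covers_dbl_iff)
qed

lemma finite_C: "finite C"
  using finite_subset[OF C_subset finite_carrier] .

lemma finite_covers_in_C: "finite {y. P y \<and> y \<in> C}"
  using finite_C by simp

lemma join_irreducibles_dbl:
  "join_irreducibles (dbl L C) =
    (\<lambda>x. x @ [x \<notin> I]) ` join_irreducibles L \<union> (\<lambda>x. x @ [True]) ` minimal_elements L C"
    (is "_ = ?J")
proof (rule set_eq_snocI)
  show "[] \<notin> join_irreducibles (dbl L C)" "[] \<notin> ?J"
    unfolding join_irreducibles_def carrier_dbl by blast+
next
  fix x b
  show "x @ [b] \<in> join_irreducibles (dbl L C) \<longleftrightarrow> x @ [b] \<in> ?J"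
  proof (cases "b \<and> x \<in> C")
    case True
    have "x @ [b] \<in> join_irreducibles (dbl L C) \<longleftrightarrow> {y. covers L x y \<and> y \<in> C} = {}"
      using True lower_covers_dbl_top[of x] C_subset_I I_Int_D finite_covers_in_C
      by (auto simp: join_irreducibles_def card_insert_if card_image[OF inj_on_snoc])
    also have "\<dots> \<longleftrightarrow> x \<in> minimal_elements L C"
      using True no_lower_cover_in_convex_iff_minimal[OF convex] by blast
    also have "\<dots> \<longleftrightarrow> x @ [b] \<in> ?J"
      using True C_subset_I by auto
    finally show ?thesis .
  next
    case False
    have "x @ [b] \<in> fst (dbl L C) \<Longrightarrow>
        card {v. covers (dbl L C) (x @ [b]) v} = card {y. covers L x y}"
      using False lower_covers_dbl card_image[OF inj_on_snoc] by simp
    then have "x @ [b] \<in> join_irreducibles (dbl L C) \<longleftrightarrow>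
        x \<in> join_irreducibles L \<and> b = (x \<notin> I)"
      using mem_dbl_unless_top[OF False] unfolding join_irreducibles_def mem_Collect_eq by metis
    also have "\<dots> \<longleftrightarrow> x @ [b] \<in> ?J"
      using False minimal_elements_subset[of L C] by auto
    finally show ?thesis .
  qed
qed

lemma meet_irreducibles_dbl:
  "meet_irreducibles (dbl L C) =
    (\<lambda>x. x @ [x \<in> D]) ` meet_irreducibles L \<union> (\<lambda>x. x @ [False]) ` maximal_elements L C"
    (is "_ = ?M")
proof (rule set_eq_snocI)
  show "[] \<notin> meet_irreducibles (dbl L C)" "[] \<notin> ?M"
    unfolding meet_irreducibles_def carrier_dbl by blast+
next
  fix x b
  show "x @ [b] \<in> meet_irreducibles (dbl L C) \<longleftrightarrow> x @ [b] \<in> ?M"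
  proof (cases "\<not> b \<and> x \<in> C")
    case True
    have "x @ [b] \<in> meet_irreducibles (dbl L C) \<longleftrightarrow> {y. covers L y x \<and> y \<in> C} = {}"
      using True upper_covers_dbl_bottom[of x] C_subset_I I_Int_D finite_covers_in_C
      by (auto simp: meet_irreducibles_def card_insert_if card_image[OF inj_on_snoc])
    also have "\<dots> \<longleftrightarrow> x \<in> maximal_elements L C"
      using True no_upper_cover_in_convex_iff_maximal[OF convex] by blast
    also have "\<dots> \<longleftrightarrow> x @ [b] \<in> ?M"
      using True I_Int_D by auto
    finally show ?thesis .
  next
    case False
    have "x @ [b] \<in> fst (dbl L C) \<Longrightarrow>
        card {v. covers (dbl L C) v (x @ [b])} = card {y. covers L y x}"
      using False upper_covers_dbl card_image[OF inj_on_snoc] by simp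
    then have "x @ [b] \<in> meet_irreducibles (dbl L C) \<longleftrightarrow>
        x \<in> meet_irreducibles L \<and> b = (x \<in> D)"
      using mem_dbl_unless_bottom[OF False] unfolding meet_irreducibles_def mem_Collect_eq by metis
    also have "\<dots> \<longleftrightarrow> x @ [b] \<in> ?M"
      using False minimal_elements_subset[of "dual L" C] by auto
    finally show ?thesis .
  qed
qed

lemma card_join_irreducibles_dbl:
  "card (join_irreducibles (dbl L C)) = card (join_irreducibles L) + card (minimal_elements L C)"
proof -
  have "finite (join_irreducibles L)"
    by (rule finite_subset[OF _ finite_carrier]) (auto simp: join_irreducibles_def)
  moreover have "finite (minimal_elements L C)"
    by (rule finite_subset[OF minimal_elements_subset finite_C])
  moreover have "(\<lambda>x. x @ [x \<notin> I]) ` join_irreducibles L \<inter> (\<lambda>x. x @ [True]) ` minimal_elements L C = {}"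
    using minimal_elements_subset[of L C] C_subset_I by auto
  ultimately show ?thesis
    unfolding join_irreducibles_dbl
    by (simp add: card_Un_disjoint card_image[OF inj_on_snoc])
qed

lemma card_meet_irreducibles_dbl:
  "card (meet_irreducibles (dbl L C)) = card (meet_irreducibles L) + card (maximal_elements L C)"
proof -
  have "finite (meet_irreducibles L)"
    by (rule finite_subset[OF _ finite_carrier]) (auto simp: meet_irreducibles_def)
  moreover have "finite (maximal_elements L C)"
    by (rule finite_subset[OF minimal_elements_subset finite_C])
  moreover have "(\<lambda>x. x @ [x \<in> D]) ` meet_irreducibles L \<inter> (\<lambda>x. x @ [False]) ` maximal_elements L C = {}"
    using minimal_elements_subset[of "dual L" C] I_Int_D by auto
  ultimately show ?thesis
    unfolding meet_irreducibles_dbl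
    by (simp add: card_Un_disjoint card_image[OF inj_on_snoc])
qed

lemma is_chain_dbl_lower_copies:
  assumes "is_chain L S"
  shows "is_chain (dbl L C) ((\<lambda>x. x @ [x \<notin> I]) ` S)"
proof -
  have S: "S \<subseteq> fst L" "\<forall>x\<in>S. \<forall>y\<in>S. snd L x y \<or> snd L y x"
    using assms unfolding is_chain_def by auto
  have mono: "x \<notin> I \<longrightarrow> y \<notin> I" if "x \<in> S" "y \<in> S" "snd L x y" for x y
    using I_down_closed[of y x] S(1) that by blast
  show ?thesis
    unfolding is_chain_def
  proof (intro conjI ballI)
    show "(\<lambda>x. x @ [x \<notin> I]) ` S \<subseteq> fst (dbl L C)"
      using S(1) I_Un_D by auto
  next
    fix u v
    assume "u \<in> (\<lambda>x. x @ [x \<notin> I]) ` S" "v \<in> (\<lambda>x. x @ [x \<notin> I]) ` S"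
    then obtain x y where "x \<in> S" "y \<in> S" "u = x @ [x \<notin> I]" "v = y @ [y \<notin> I]"
      by blast
    then show "snd (dbl L C) u v \<or> snd (dbl L C) v u"
      using S(2) mono[of x y] mono[of y x] by auto
  qed
qed

lemma is_chain_dbl_through:
  assumes "is_chain L S" "c \<in> S" "c \<in> C"
  shows "is_chain (dbl L C) (insert (c @ [False]) ((\<lambda>y. y @ [snd L c y]) ` S))"
    and "card (insert (c @ [False]) ((\<lambda>y. y @ [snd L c y]) ` S)) = card S + 1"
proof -
  have S: "S \<subseteq> fst L" "\<forall>x\<in>S. \<forall>y\<in>S. snd L x y \<or> snd L y x"
    using assms(1) unfolding is_chain_def by auto
  have c: "c \<in> fst L" "c \<in> I" "c \<in> D"
    using assms(3) C_subset C_subset_I I_Int_D by auto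
  have mem: "y @ [snd L c y] \<in> fst (dbl L C)" if "y \<in> S" for y
    using that S D_up_closed[OF c(3), of y] I_down_closed[OF c(2), of y] assms(2) by auto
  have le_c: "snd (dbl L C) (c @ [False]) (y @ [snd L c y]) \<or> snd (dbl L C) (y @ [snd L c y]) (c @ [False])"
    if "y \<in> S" for y
    using that S(2) assms(2) by auto
  have le_yz: "snd (dbl L C) (y @ [snd L c y]) (z @ [snd L c z]) \<or> snd (dbl L C) (z @ [snd L c z]) (y @ [snd L c y])"
    if "y \<in> S" "z \<in> S" for y z
    using that S le_trans[of c y z] le_trans[of c z y] c(1) by auto
  show "is_chain (dbl L C) (insert (c @ [False]) ((\<lambda>y. y @ [snd L c y]) ` S))"
    unfolding is_chain_def using c(2) mem le_c le_yz le_refl[OF c(1)] by auto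
  have "c @ [False] \<notin> (\<lambda>y. y @ [snd L c y]) ` S"
    using le_refl[OF c(1)] by auto
  then show "card (insert (c @ [False]) ((\<lambda>y. y @ [snd L c y]) ` S)) = card S + 1"
    using finite_chain[OF assms(1)] by (simp add: card_image[OF inj_on_snoc])
qed

lemma is_chain_butlast:
  assumes "is_chain (dbl L C) S'"
  shows "is_chain L (butlast ` S')"
  unfolding is_chain_def
proof (intro conjI ballI)
  have S': "S' \<subseteq> fst (dbl L C)" "\<forall>u\<in>S'. \<forall>v\<in>S'. snd (dbl L C) u v \<or> snd (dbl L C) v u"
    using assms unfolding is_chain_def by blast+
  then show "butlast ` S' \<subseteq> fst L"
    using butlast_mem_dbl by blast
  fix x y
  assume "x \<in> butlast ` S'" "y \<in> butlast ` S'"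
  then obtain u v where uv: "u \<in> S'" "v \<in> S'" "x = butlast u" "y = butlast v"
    by blast
  then have "snd (dbl L C) (butlast u @ [last u]) (butlast v @ [last v]) \<or>
      snd (dbl L C) (butlast v @ [last v]) (butlast u @ [last u])"
    using S' mem_dbl_snoc by (metis subsetD)
  then show "snd L x y \<or> snd L y x"
    unfolding uv le_dbl by blast
qed

lemma chain_dbl_both_copies_unique:
  assumes "is_chain (dbl L C) S'"
    and "x @ [False] \<in> S'" "x @ [True] \<in> S'" "y @ [False] \<in> S'" "y @ [True] \<in> S'"
  shows "x = y"
proof -
  have "snd L y x" "snd L x y"
    using assms unfolding is_chain_def by fastforce+
  moreover have "x \<in> fst L" "y \<in> fst L"
    using assms mem_dbl_carrier unfolding is_chain_def by blast+
  ultimately show ?thesis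
    using le_antisym by blast
qed

lemma card_chain_dbl_le:
  assumes "is_chain (dbl L C) S'"
  shows "card S' \<le> card (butlast ` S') + of_bool (butlast ` S' \<inter> C \<noteq> {})"
proof -
  let ?B = "{x. x @ [False] \<in> S' \<and> x @ [True] \<in> S'}"
  have S': "S' \<subseteq> fst (dbl L C)"
    using assms unfolding is_chain_def by blast
  have fin: "finite S'"
    using finite_poset.finite_chain[OF finite_poset_dbl assms] .
  have "[] \<notin> S'"
    using S' unfolding carrier_dbl by blast
  then have card_S': "card S' = card (butlast ` S') + card ?B"
    using card_snoc_set[OF fin] by blast
  have "?B \<subseteq> butlast ` S' \<inter> C"
  proof
    fix x
    assume x: "x \<in> ?B"
    then have "x @ [False] \<in> fst (dbl L C)" "x @ [True] \<in> fst (dbl L C)"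
      using S' by blast+
    moreover have "x \<in> butlast ` S'"
      using x by (force intro: image_eqI[where x = "x @ [False]"])
    ultimately show "x \<in> butlast ` S' \<inter> C"
      using in_C_if_in_I_D by simp
  qed
  moreover have "finite ?B"
    using finite_subset[OF calculation] fin by blast
  then have "card ?B \<le> 1"
    using chain_dbl_both_copies_unique[OF assms] by (simp add: card_le_Suc0_iff_eq)
  ultimately show ?thesis
    using card_S' by (cases "?B = {}") auto
qed

lemma len_dbl_if_spine_disjoint:
  assumes "C \<inter> spine L = {}"
  shows "len (dbl L C) = len L"
proof -
  obtain S where S: "is_chain L S" "card S = len L + 1"
    using ex_chain_card_len by blast
  show ?thesis
  proof (rule finite_poset.len_eqI[OF finite_poset_dbl])
    fix S'
    assume S': "is_chain (dbl L C) S'"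
    have chain: "is_chain L (butlast ` S')"
      using is_chain_butlast[OF S'] .
    then have "card (butlast ` S') \<le> len L + 1"
      by (rule card_chain_le_len)
    moreover have "card (butlast ` S') \<noteq> len L + 1" if "butlast ` S' \<inter> C \<noteq> {}"
      using that assms chain mem_spine_iff by blast
    ultimately show "card S' \<le> len L + 1"
      using card_chain_dbl_le[OF S'] by (cases "butlast ` S' \<inter> C = {}") auto
  next
    show "is_chain (dbl L C) ((\<lambda>x. x @ [x \<notin> I]) ` S)"
      and "card ((\<lambda>x. x @ [x \<notin> I]) ` S) = len L + 1"
      using is_chain_dbl_lower_copies[OF S(1)] S(2) by (simp_all add: card_image[OF inj_on_snoc])
  qed
qed

lemma len_dbl_if_meets_spine:
  assumes "c \<in> C" "c \<in> spine L"
  shows "len (dbl L C) = len L + 1"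
proof -
  obtain S where S: "is_chain L S" "card S = len L + 1" "c \<in> S"
    using assms(2) mem_spine_iff by blast
  show ?thesis
  proof (rule finite_poset.len_eqI[OF finite_poset_dbl])
    fix S'
    assume S': "is_chain (dbl L C) S'"
    show "card S' \<le> len L + 1 + 1"
      using card_chain_dbl_le[OF S'] card_chain_le_len[OF is_chain_butlast[OF S']]
      by (cases "butlast ` S' \<inter> C = {}") simp_all
  next
    show "is_chain (dbl L C) (insert (c @ [False]) ((\<lambda>y. y @ [snd L c y]) ` S))"
      and "card (insert (c @ [False]) ((\<lambda>y. y @ [snd L c y]) ` S)) = len L + 1 + 1"
      using is_chain_dbl_through[OF S(1,3) assms(1)] S(2) by simp_all
  qed
qed

lemma len_dbl: "len (dbl L C) = len L + of_bool (C \<inter> spine L \<noteq> {})"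
  using len_dbl_if_spine_disjoint len_dbl_if_meets_spine by (cases "C \<inter> spine L = {}") auto

end

section \<open>The posets E[C_1, ..., C_n]\<close>

lemma sum_of_bool_eq_sum_iff:
  fixes g :: "'a \<Rightarrow> nat"
  assumes "finite A" "\<And>i. i \<in> A \<Longrightarrow> 0 < g i"
  shows "(\<Sum>i\<in>A. of_bool (P i)) = sum g A \<longleftrightarrow> (\<forall>i\<in>A. P i \<and> g i = 1)"
proof
  assume eq: "(\<Sum>i\<in>A. of_bool (P i)) = sum g A"
  show "\<forall>i\<in>A. P i \<and> g i = 1"
  proof (rule ccontr)
    assume "\<not> (\<forall>i\<in>A. P i \<and> g i = 1)"
    then obtain j where "j \<in> A" "of_bool (P j) < g j"
      using assms(2) by (metis Suc_lessI of_bool_eq(1) of_bool_eq(2) One_nat_def)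
    moreover have "\<forall>i\<in>A. of_bool (P i) \<le> g i"
      using assms(2) by (simp add: Suc_leI)
    ultimately have "(\<Sum>i\<in>A. of_bool (P i)) < sum g A"
      using sum_strict_mono_ex1[OF assms(1), of "\<lambda>i. of_bool (P i)" g] by blast
    with eq show False
      by simp
  qed
qed simp

lemma finite_poset_E0: "finite_poset E0"
  by unfold_locales (auto simp: E0_def)

lemma len_E0: "len E0 = 0"
proof (rule finite_poset.len_eqI[OF finite_poset_E0])
  fix S
  assume "is_chain E0 S"
  then have "S \<subseteq> {[]}"
    unfolding is_chain_def E0_def by simp
  then show "card S \<le> 0 + 1"
    using card_mono[of "{[]}" S] by simp
next
  show "is_chain E0 {[]}" "card {[]} = 0 + 1"
    unfolding is_chain_def E0_def by simp_all
qed

lemma irreducibles_E0: "join_irreducibles E0 = {}" "meet_irreducibles E0 = {}"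
  unfolding join_irreducibles_def meet_irreducibles_def covers_def E0_def by auto

lemma E_Nil: "E [] = E0"
  by (simp add: E_def)

lemma E_snoc: "E (Cs @ [C]) = dbl (E Cs) C"
  by (simp add: E_def)

definition doubling_sequence :: "bool list set list \<Rightarrow> bool" where
  "doubling_sequence Cs \<longleftrightarrow> (\<forall>i<length Cs. Cs ! i \<noteq> {} \<and> convex (E (take i Cs)) (Cs ! i))"

lemma doubling_sequence_snoc:
  "doubling_sequence (Cs @ [C]) \<longleftrightarrow> doubling_sequence Cs \<and> C \<noteq> {} \<and> convex (E Cs) C"
  unfolding doubling_sequence_def by (auto simp: less_Suc_eq nth_append)

lemma doubling_sequence_take: "doubling_sequence Cs \<Longrightarrow> doubling_sequence (take i Cs)"
  unfolding doubling_sequence_def by (simp add: min_def)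

lemma finite_poset_E: "doubling_sequence Cs \<Longrightarrow> finite_poset (E Cs)"
proof (induction Cs rule: rev_induct)
  case Nil
  then show ?case
    by (simp add: E_Nil finite_poset_E0)
next
  case (snoc C Cs)
  then have "doubling (E Cs) C"
    by (simp add: doubling_sequence_snoc doubling_def doubling_axioms_def)
  then show ?case
    by (simp add: E_snoc doubling.finite_poset_dbl)
qed

lemma doubling_nth:
  assumes "doubling_sequence Cs" "i < length Cs"
  shows "doubling (E (take i Cs)) (Cs ! i)"
  using finite_poset_E[OF doubling_sequence_take[OF assms(1)]] assms
  unfolding doubling_sequence_def doubling_def doubling_axioms_def by blast

lemma sum_prefixes_snoc:
  "(\<Sum>i<length (xs @ [x]). f (take i (xs @ [x])) ((xs @ [x]) ! i)) =
    (\<Sum>i<length xs. f (take i xs) (xs ! i)) + f xs x"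
  by (simp add: nth_append)

lemma E_sum_of_increments:
  fixes f :: "pos \<Rightarrow> nat"
  assumes "doubling_sequence Cs" "f E0 = 0"
    and "\<And>L C. doubling L C \<Longrightarrow> f (dbl L C) = f L + g L C"
  shows "f (E Cs) = (\<Sum>i<length Cs. g (E (take i Cs)) (Cs ! i))"
  using assms(1)
proof (induction Cs rule: rev_induct)
  case Nil
  then show ?case
    by (simp add: E_Nil assms(2))
next
  case (snoc C Cs)
  then have seq: "doubling_sequence Cs" and "doubling (E Cs) C"
    using finite_poset_E by (simp_all add: doubling_sequence_snoc doubling_def doubling_axioms_def)
  then have "f (E (Cs @ [C])) = f (E Cs) + g (E Cs) C"
    by (simp add: E_snoc assms(3))
  then show ?case
    unfolding sum_prefixes_snoc[of "\<lambda>p c. g (E p) c"] using snoc.IH[OF seq] by simp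
qed

lemma len_E:
  "doubling_sequence Cs \<Longrightarrow>
    len (E Cs) = (\<Sum>i<length Cs. of_bool (Cs ! i \<inter> spine (E (take i Cs)) \<noteq> {}))"
  by (rule E_sum_of_increments) (simp_all add: len_E0 doubling.len_dbl Int_commute)

lemma card_join_irreducibles_E:
  "doubling_sequence Cs \<Longrightarrow>
    card (join_irreducibles (E Cs)) = (\<Sum>i<length Cs. card (minimal_elements (E (take i Cs)) (Cs ! i)))"
  by (rule E_sum_of_increments) (simp_all add: irreducibles_E0 doubling.card_join_irreducibles_dbl)

lemma card_meet_irreducibles_E:
  "doubling_sequence Cs \<Longrightarrow>
    card (meet_irreducibles (E Cs)) = (\<Sum>i<length Cs. card (maximal_elements (E (take i Cs)) (Cs ! i)))"
  by (rule E_sum_of_increments) (simp_all add: irreducibles_E0 doubling.card_meet_irreducibles_dbl)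

lemma join_extremal_E_iff:
  assumes "doubling_sequence Cs"
  shows "join_extremal (E Cs) \<longleftrightarrow> (\<forall>i<length Cs.
    Cs ! i \<inter> spine (E (take i Cs)) \<noteq> {} \<and> card (minimal_elements (E (take i Cs)) (Cs ! i)) = 1)"
proof -
  have "0 < card (minimal_elements (E (take i Cs)) (Cs ! i))" if "i < length Cs" for i
  proof -
    interpret doubling "E (take i Cs)" "Cs ! i"
      by (rule doubling_nth[OF assms that])
    show ?thesis
      using card_minimal_elements_pos[OF C_subset] assms that unfolding doubling_sequence_def by blast
  qed
  then show ?thesis
    unfolding join_extremal_def len_E[OF assms] card_join_irreducibles_E[OF assms]
    by (subst sum_of_bool_eq_sum_iff) auto
qed

lemma meet_extremal_E_iff:
  assumes "doubling_sequence Cs"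
  shows "meet_extremal (E Cs) \<longleftrightarrow> (\<forall>i<length Cs.
    Cs ! i \<inter> spine (E (take i Cs)) \<noteq> {} \<and> card (maximal_elements (E (take i Cs)) (Cs ! i)) = 1)"
proof -
  have "0 < card (maximal_elements (E (take i Cs)) (Cs ! i))" if "i < length Cs" for i
  proof -
    interpret doubling "E (take i Cs)" "Cs ! i"
      by (rule doubling_nth[OF assms that])
    show ?thesis
      using card_maximal_elements_pos[OF C_subset] assms that unfolding doubling_sequence_def by blast
  qed
  then show ?thesis
    unfolding meet_extremal_def len_E[OF assms] card_meet_irreducibles_E[OF assms]
    by (subst sum_of_bool_eq_sum_iff) auto
qed

theorem proposition3p11:
  fixes Cs :: "bool list set list"
  assumes "\<forall>i<length Cs. Cs ! i \<noteq> {} \<and> convex (E (take i Cs)) (Cs ! i)"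
  shows "(join_extremal (E Cs) \<longleftrightarrow>
            (\<forall>i<length Cs. lower_pseudo_interval (E (take i Cs)) (Cs ! i) \<and>
                            Cs ! i \<inter> spine (E (take i Cs)) \<noteq> {}))
       \<and> (meet_extremal (E Cs) \<longleftrightarrow>
            (\<forall>i<length Cs. upper_pseudo_interval (E (take i Cs)) (Cs ! i) \<and>
                            Cs ! i \<inter> spine (E (take i Cs)) \<noteq> {}))
       \<and> (extremal (E Cs) \<longleftrightarrow>
            (\<forall>i<length Cs. is_interval (E (take i Cs)) (Cs ! i) \<and>
                            Cs ! i \<inter> spine (E (take i Cs)) \<noteq> {}))"
proof -
  have seq: "doubling_sequence Cs"
    using assms unfolding doubling_sequence_def .
  have "Cs ! i \<noteq> {}" if "i < length Cs" for i
    using assms that by blast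
  note shape_iff = finite_poset.pseudo_intervals_iff_card_extremal_elements[OF
      doubling.axioms(1)[OF doubling_nth[OF seq]] doubling.convex[OF doubling_nth[OF seq]] this]
  show ?thesis
    unfolding extremal_def join_extremal_E_iff[OF seq] meet_extremal_E_iff[OF seq]
    using shape_iff by auto
qed

end
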